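(* Let $n\ge 2$ and consider the potential $V$ of the context with $\sigma=0$. There is a critical point $\mathbf a=(a_1,\dots,a_n)$ of $V$ on $\Omega$ (a symmetric collinear equilibrium) such that every $a_j$ lies on the real axis, $a_j=(p_j,0)$ with $p_j\in\mathbb R$, and $$p_1<p_2<\dots<p_n,\qquad p_{n+1-j}=-p_j\quad (j=1,\dots,n).$$
   Context: For $u=(u_1,\dots,u_n)\in(\mathbb R^2)^n$ let $$V(u)=\sum_{j=1}^{n-1}U(|u_{j+1}-u_j|^2)+\sum_{1\le j<k\le n}W(|u_j-u_k|^2),$$ where $U(x)=x-2x^{1/2}$ and $W\in C^2((0,\infty))$ satisfies $\lim_{x\to0}W(x)=\lim_{x\to0}(-W'(x))=+\infty$ and $\lim_{x\to\infty}W(x)=\lim_{x\to\infty}W'(x)=0$. $V$ is defined on $\Omega=\{u\in\mathbb R^{2n}:u_j\ne u_k\text{ for }j\ne k\}$; a critical point means $\nabla V(\mathbf a)=0$. *)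

theory Defs
  imports "HOL-Analysis.Analysis"
begin

text \<open>Points of the plane R^2 are represented as complex numbers; a configuration
  u = (u_1,...,u_n) is a function nat => complex, of which only the values at 1..n matter.\<close>

definition Upot :: "real \<Rightarrow> real" where
  "Upot x = x - 2 * sqrt x"

definition Vpot :: "(real \<Rightarrow> real) \<Rightarrow> nat \<Rightarrow> (nat \<Rightarrow> complex) \<Rightarrow> real" where
  "Vpot W n u =
     (\<Sum>j=1..n-1. Upot ((cmod (u (j+1) - u j))^2))
   + (\<Sum>j=1..n. \<Sum>k=j+1..n. W ((cmod (u j - u k))^2))"

definition inOmega :: "nat \<Rightarrow> (nat \<Rightarrow> complex) \<Rightarrow> bool" where
  "inOmega n u \<longleftrightarrow> (\<forall>j\<in>{1..n}. \<forall>k\<in>{1..n}. j \<noteq> k \<longrightarrow> u j \<noteq> u k)"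

definition critical_point :: "(real \<Rightarrow> real) \<Rightarrow> nat \<Rightarrow> (nat \<Rightarrow> complex) \<Rightarrow> bool" where
  "critical_point W n a \<longleftrightarrow>
     (\<forall>j\<in>{1..n}. \<forall>v::complex.
        ((\<lambda>t::real. Vpot W n (a(j := a j + of_real t * v))) has_real_derivative 0) (at 0))"

end

theory Submission
  imports Defs
begin

text \<open>The equilibrium is a minimiser of \<open>V\<close> over the collinear chains \<open>p 1 < \<dots> < p n\<close> with
  \<open>p (n+1-j) = - p j\<close>. On this set \<open>V\<close> is coercive: \<open>W\<close> is bounded below and blows up at
  collisions, which on a sublevel set keeps neighbours a fixed distance apart, while the quadratic
  growth of \<open>U\<close> bounds every bond; so a minimiser exists by compactness. It is a critical point of
  \<open>V\<close> on all of \<open>\<Omega>\<close> (symmetric criticality): \<open>V\<close> is invariant under \<open>u j \<mapsto> - u (n+1-j)\<close>,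
  so at the symmetric minimiser the derivative along a real direction equals the derivative along
  its reflection, and their sum is tangent to the symmetric chains, where minimality kills it.
  Directions orthogonal to the line do not contribute because all pairwise differences are real.\<close>

lemma successive_increments_le:
  fixes f :: "nat \<Rightarrow> real"
  assumes step: "\<And>i. i \<in> {1..<n} \<Longrightarrow> f i + d \<le> f (i+1)"
    and "1 \<le> j" "j \<le> k" "k \<le> n"
  shows "f j + real (k - j) * d \<le> f k"
  using \<open>j \<le> k\<close> \<open>k \<le> n\<close>
proof (induction k)
  case (Suc k)
  show ?case
  proof (cases "j = Suc k")
    case False
    then have "f j + real (Suc k - j) * d = f j + real (k - j) * d + d"
      using Suc.prems by (simp add: Suc_diff_le algebra_simps)
    also have "\<dots> \<le> f k + d" using Suc False by simp
    also have "\<dots> \<le> f (Suc k)" using step[of k] assms(2) Suc False by simp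
    finally show ?thesis .
  qed simp
qed (use \<open>1 \<le> j\<close> in simp)

lemma strict_chain_less:
  fixes p :: "nat \<Rightarrow> real"
  assumes step: "\<And>i. i \<in> {1..<n} \<Longrightarrow> p i < p (i+1)" and "1 \<le> j" "j < k" "k \<le> n"
  shows "p j < p k"
proof -
  have "p j + real (k - 1 - j) * 0 \<le> p (k - 1)"
    using assms by (intro successive_increments_le[of n]) (auto intro: less_imp_le)
  also have "\<dots> < p (k - 1 + 1)" using assms by (intro step) auto
  also have "k - 1 + 1 = k" using assms by simp
  finally show ?thesis by simp
qed

lemma summand_le_sum:
  fixes f :: "'a \<Rightarrow> real"
  assumes "finite A" "j \<in> A" "\<And>i. i \<in> A \<Longrightarrow> - L \<le> f i" "card A \<le> N" "L \<ge> 0"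
  shows "f j \<le> sum f A + real N * L"
proof -
  have "real (card (A - {j})) * (- L) \<le> sum f (A - {j})"
    using assms by (intro sum_bounded_below) auto
  moreover have "real (card (A - {j})) * L \<le> real N * L"
    using assms card_Diff1_le[of A j] by (intro mult_right_mono) auto
  ultimately show ?thesis using assms by (simp add: sum.remove)
qed

lemma sum_ge_card_bound:
  fixes f :: "'a \<Rightarrow> real"
  assumes "\<And>i. i \<in> A \<Longrightarrow> - L \<le> f i" "card A \<le> N" "L \<ge> 0"
  shows "- (real N * L) \<le> sum f A"
proof -
  have "real (card A) * (- L) \<le> sum f A" using assms by (intro sum_bounded_below) auto
  moreover have "real (card A) * L \<le> real N * L" using assms by (intro mult_right_mono) auto
  ultimately show ?thesis by simp
qed

lemma bounded_below_at_right_0_at_top: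
  fixes W :: "real \<Rightarrow> real"
  assumes "continuous_on {0<..} W"
    and "filterlim W at_top (at_right 0)" and "(W \<longlongrightarrow> 0) at_top"
  shows "\<exists>B\<ge>0. \<forall>x>0. - B \<le> W x"
proof -
  have "eventually (\<lambda>x. -1 < W x) at_top"
    using assms(3) by (rule order_tendstoD) simp
  then obtain X where X: "\<And>x. x \<ge> X \<Longrightarrow> -1 < W x"
    by (auto simp: eventually_at_top_linorder)
  have "eventually (\<lambda>x. 0 \<le> W x) (at_right 0)"
    using assms(2) by (simp add: filterlim_at_top)
  then obtain e where e: "e > 0" "\<And>y. y > 0 \<Longrightarrow> y < e \<Longrightarrow> 0 \<le> W y"
    by (auto simp: eventually_at_right_field)
  have "compact (W ` {e..X})"
    by (intro compact_continuous_image continuous_on_subset[OF assms(1)]) (use e in auto)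
  then obtain b where "\<forall>y\<in>W ` {e..X}. \<bar>y\<bar> \<le> b"
    using compact_imp_bounded bounded_real by blast
  then have b: "\<bar>W x\<bar> \<le> b" if "x \<in> {e..X}" for x
    using that by blast
  have "- max 1 b \<le> W x" if "x > 0" for x
  proof (cases "x < e")
    case False
    then show ?thesis using X[of x] b[of x] by (cases "x \<ge> X") auto
  qed (use e that in force)
  then show ?thesis by (intro exI[of _ "max 1 b"]) auto
qed

lemma continuous_on_coordinate [continuous_intros]:
  "continuous_on S (\<lambda>x::'a \<Rightarrow> 'b::topological_space. x i)"
  by (rule continuous_on_subset[OF continuous_on_product_coordinates]) auto

section \<open>Directional derivatives of the potential\<close>

definition Upot_deriv :: "real \<Rightarrow> real" where
  "Upot_deriv x = 1 - 1 / sqrt x"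

lemma Upot_has_real_derivative: "x > 0 \<Longrightarrow> (Upot has_real_derivative Upot_deriv x) (at x)"
  unfolding Upot_def[abs_def] Upot_deriv_def
  by (auto intro!: derivative_eq_intros simp: field_simps)

lemma has_real_derivative_comp_cmod_sq:
  assumes "(f has_real_derivative D) (at ((cmod z)^2))"
  shows "((\<lambda>t. f ((cmod (z + of_real t * w))^2)) has_real_derivative D * (2 * inner z w)) (at 0)"
proof -
  have "((\<lambda>t. (cmod (z + of_real t * w))^2) has_real_derivative 2 * inner z w) (at 0)"
    by (simp add: cmod_power2 inner_complex_def) (auto intro!: derivative_eq_intros)
  from DERIV_chain2[OF _ this] show ?thesis using assms by simp
qed

definition Vpot_deriv ::
    "(real \<Rightarrow> real) \<Rightarrow> nat \<Rightarrow> (nat \<Rightarrow> complex) \<Rightarrow> (nat \<Rightarrow> complex) \<Rightarrow> real" where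
  "Vpot_deriv W' n u h =
     (\<Sum>j=1..n-1. Upot_deriv ((cmod (u (j+1) - u j))^2) * (2 * inner (u (j+1) - u j) (h (j+1) - h j)))
   + (\<Sum>j=1..n. \<Sum>k=j+1..n. W' ((cmod (u j - u k))^2) * (2 * inner (u j - u k) (h j - h k)))"

lemma Vpot_has_directional_derivative:
  assumes "inOmega n u"
    and dW: "\<And>x. x > 0 \<Longrightarrow> (W has_real_derivative W' x) (at x)"
  shows "((\<lambda>t. Vpot W n (\<lambda>k. u k + of_real t * h k)) has_real_derivative Vpot_deriv W' n u h) (at 0)"
proof -
  have line: "u j + of_real t * h j - (u k + of_real t * h k) = (u j - u k) + of_real t * (h j - h k)"
    for j k t by (simp add: algebra_simps)
  have pos: "(cmod (u j - u k))^2 > 0" if "j \<in> {1..n}" "k \<in> {1..n}" "j \<noteq> k" for j k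
    using assms(1) that by (auto simp: inOmega_def)
  show ?thesis
    unfolding Vpot_def Vpot_deriv_def line
    by (intro DERIV_add DERIV_sum has_real_derivative_comp_cmod_sq Upot_has_real_derivative dW pos)
       auto
qed

lemma Vpot_deriv_add:
  "Vpot_deriv W' n u (\<lambda>k. h k + g k) = Vpot_deriv W' n u h + Vpot_deriv W' n u g"
  unfolding Vpot_deriv_def
  by (simp add: add_diff_add inner_add_right distrib_left distrib_right sum.distrib)

lemma Vpot_deriv_cong:
  "(\<And>k. k \<in> {1..n} \<Longrightarrow> h k = g k) \<Longrightarrow> Vpot_deriv W' n u h = Vpot_deriv W' n u g"
  unfolding Vpot_deriv_def by (intro arg_cong2[where f="(+)"] sum.cong refl) auto

lemma Vpot_deriv_of_real_eq_Re:
  "Vpot_deriv W' n (\<lambda>k. of_real (p k)) h = Vpot_deriv W' n (\<lambda>k. of_real (p k)) (\<lambda>k. of_real (Re (h k)))"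
  unfolding Vpot_deriv_def by (simp add: inner_complex_def)

lemma Vpot_cong: "(\<And>k. k \<in> {1..n} \<Longrightarrow> u k = v k) \<Longrightarrow> Vpot W n u = Vpot W n v"
  unfolding Vpot_def by (intro arg_cong2[where f="(+)"] sum.cong refl) auto

lemma Vpot_reflect: "Vpot W n (\<lambda>k. - u (n+1-k)) = Vpot W n u"
proof -
  have "(\<Sum>j=1..n-1. Upot ((cmod (- u (n+1-(j+1)) - - u (n+1-j)))^2))
      = (\<Sum>j=1..n-1. Upot ((cmod (u (j+1) - u j))^2))"
    by (rule sum.reindex_bij_witness[where i="\<lambda>j. n - j" and j="\<lambda>j. n - j"])
       (auto simp: norm_minus_commute Suc_diff_le)
  moreover have "(\<Sum>j=1..n. \<Sum>k=j+1..n. W ((cmod (- u (n+1-j) - - u (n+1-k)))^2))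
      = (\<Sum>j=1..n. \<Sum>k=j+1..n. W ((cmod (u j - u k))^2))"
    unfolding sum.Sigma[OF finite_atLeastAtMost ballI[OF finite_atLeastAtMost]]
    by (rule sum.reindex_bij_witness[where i="\<lambda>(j,k). (n+1-k, n+1-j)" and j="\<lambda>(j,k). (n+1-k, n+1-j)"])
       (auto simp: norm_minus_commute)
  ultimately show ?thesis unfolding Vpot_def by simp
qed

lemma Vpot_deriv_reflect:
  assumes om: "inOmega n u" and u_sym: "\<And>k. k \<in> {1..n} \<Longrightarrow> u (n+1-k) = - u k"
    and dW: "\<And>x. x > 0 \<Longrightarrow> (W has_real_derivative W' x) (at x)"
  shows "Vpot_deriv W' n u (\<lambda>k. - h (n+1-k)) = Vpot_deriv W' n u h"
proof -
  have dV: "((\<lambda>t. Vpot W n (\<lambda>k. u k + of_real t * g k)) has_real_derivative Vpot_deriv W' n u g) (at 0)"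
    for g by (rule Vpot_has_directional_derivative[OF om dW])
  have "Vpot W n (\<lambda>k. u k + of_real t * - h (n+1-k)) = Vpot W n (\<lambda>k. u k + of_real t * h k)" for t
  proof -
    have "Vpot W n (\<lambda>k. u k + of_real t * h k) = Vpot W n (\<lambda>k. - (u (n+1-k) + of_real t * h (n+1-k)))"
      by (rule Vpot_reflect[symmetric])
    also have "\<dots> = Vpot W n (\<lambda>k. u k + of_real t * - h (n+1-k))"
    proof (rule Vpot_cong)
      fix k assume "k \<in> {1..n}"
      then show "- (u (n+1-k) + of_real t * h (n+1-k)) = u k + of_real t * - h (n+1-k)"
        using u_sym[of k] by simp
    qed
    finally show ?thesis by simp
  qed
  then have "((\<lambda>t. Vpot W n (\<lambda>k. u k + of_real t * h k))
      has_real_derivative Vpot_deriv W' n u (\<lambda>k. - h (n+1-k))) (at 0)"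
    using dV[of "\<lambda>k. - h (n+1-k)"] by simp
  then show ?thesis by (rule DERIV_unique[OF _ dV[of h]])
qed

section \<open>Minimising over symmetric chains\<close>

definition Vline :: "(real \<Rightarrow> real) \<Rightarrow> nat \<Rightarrow> (nat \<Rightarrow> real) \<Rightarrow> real" where
  "Vline W n p = (\<Sum>j=1..n-1. Upot ((p (j+1) - p j)^2)) + (\<Sum>j=1..n. \<Sum>k=j+1..n. W ((p j - p k)^2))"

lemma Vpot_of_real: "Vpot W n (\<lambda>k. of_real (p k)) = Vline W n p"
  unfolding Vpot_def Vline_def by (simp flip: of_real_diff)

text \<open>Coordinates outside \<open>{1..n}\<close> are pinned to \<open>0\<close> so that bounded sets of chains are
  compact in the product topology of \<open>nat \<Rightarrow> real\<close>.\<close>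
definition sym_chain :: "nat \<Rightarrow> (nat \<Rightarrow> real) \<Rightarrow> bool" where
  "sym_chain n p \<longleftrightarrow> (\<forall>k. k \<notin> {1..n} \<longrightarrow> p k = 0) \<and> (\<forall>j\<in>{1..n}. p (n+1-j) = - p j)
     \<and> (\<forall>j\<in>{1..<n}. p j < p (j+1))"

lemma Upot_square: "Upot (d^2) = d^2 - 2 * \<bar>d\<bar>"
  unfolding Upot_def by simp

lemma Upot_square_ge: "- 1 \<le> Upot (d^2)"
  using zero_le_power2[of "\<bar>d\<bar> - 1"] unfolding Upot_square by (simp add: power2_diff)

lemma Vline_consecutive_terms_le:
  assumes B: "B \<ge> 0" "\<And>x. x > 0 \<Longrightarrow> - B \<le> W x"
    and incr: "\<And>i. i \<in> {1..<n} \<Longrightarrow> p i < p (i+1)" and j: "j \<in> {1..<n}"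
  shows "Upot ((p (j+1) - p j)^2) \<le> Vline W n p + real n + 2 * (real n * (real n * B))"
    and "W ((p j - p (j+1))^2) \<le> Vline W n p + real n + 2 * (real n * (real n * B))"
proof -
  define US where "US = (\<Sum>j=1..n-1. Upot ((p (j+1) - p j)^2))"
  define WS where "WS = (\<Sum>j=1..n. \<Sum>k=j+1..n. W ((p j - p k)^2))"
  have V: "Vline W n p = US + WS" unfolding Vline_def US_def WS_def ..
  have W_ge: "- B \<le> W ((p i - p k)^2)" if "i \<in> {1..n}" "k \<in> {i+1..n}" for i k
    using strict_chain_less[of n p i k] incr that by (intro B(2)) auto
  have inner_ge: "- (real n * B) \<le> (\<Sum>k=i+1..n. W ((p i - p k)^2))" if "i \<in> {1..n}" for i
    by (rule sum_ge_card_bound) (use W_ge that B in auto)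
  have US_ge: "- (real n * 1) \<le> US"
    unfolding US_def by (rule sum_ge_card_bound) (use Upot_square_ge in auto)
  have WS_ge: "- (real n * (real n * B)) \<le> WS"
    unfolding WS_def by (rule sum_ge_card_bound) (use inner_ge B in auto)
  have nB: "0 \<le> real n * B" using B(1) by simp
  have nnB: "real n * B \<le> real n * (real n * B)"
    using mult_right_mono[OF _ nB, of 1 "real n"] j by simp
  have "Upot ((p (j+1) - p j)^2) \<le> US + real n * 1"
    unfolding US_def by (rule summand_le_sum) (use j Upot_square_ge in auto)
  then show "Upot ((p (j+1) - p j)^2) \<le> Vline W n p + real n + 2 * (real n * (real n * B))"
    using WS_ge nB nnB unfolding V by linarith
  have "W ((p j - p (j+1))^2) \<le> (\<Sum>k=j+1..n. W ((p j - p k)^2)) + real n * B"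
    by (rule summand_le_sum) (use j W_ge B in auto)
  moreover have "(\<Sum>k=j+1..n. W ((p j - p k)^2)) \<le> WS + real n * (real n * B)"
    unfolding WS_def by (rule summand_le_sum) (use j inner_ge B in auto)
  ultimately show "W ((p j - p (j+1))^2) \<le> Vline W n p + real n + 2 * (real n * (real n * B))"
    using US_ge nB nnB unfolding V by linarith
qed

lemma abs_le_of_Upot_square_le:
  assumes "Upot (d^2) \<le> C"
  shows "\<bar>d\<bar> \<le> \<bar>C\<bar> + 3"
proof (rule ccontr)
  assume "\<not> ?thesis"
  then have big: "\<bar>d\<bar> > \<bar>C\<bar> + 3" by simp
  then have "\<bar>d\<bar> * 1 \<le> \<bar>d\<bar> * (\<bar>d\<bar> - 2)" by (intro mult_left_mono) auto
  also have "\<dots> = Upot (d^2)"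
    unfolding Upot_square by (simp add: power2_eq_square algebra_simps)
  finally have "\<bar>d\<bar> \<le> Upot (d^2)" by simp
  then show False using big assms by simp
qed

lemma sym_chain_abs_le:
  assumes p: "sym_chain n p" and "n \<ge> 1" and "G \<ge> 0"
    and steps: "\<And>i. i \<in> {1..<n} \<Longrightarrow> p (i+1) \<le> p i + G"
  shows "\<bar>p k\<bar> \<le> real n * G"
proof (cases "k \<in> {1..n}")
  case True
  have incr: "\<And>i. i \<in> {1..<n} \<Longrightarrow> p i < p (i+1)" using p by (simp add: sym_chain_def)
  have "- p i + - G \<le> - p (i+1)" if "i \<in> {1..<n}" for i
    using steps[OF that] by simp
  then have "- p 1 + real (n - 1) * - G \<le> - p n"
    using \<open>n \<ge> 1\<close> by (intro successive_increments_le[where f="\<lambda>i. - p i" and n=n]) auto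
  moreover have "p n = - p 1" using p \<open>n \<ge> 1\<close> by (auto simp: sym_chain_def dest: bspec[of _ _ 1])
  moreover have "real (n - 1) * G \<le> (2 * real n) * G"
    using \<open>G \<ge> 0\<close> by (intro mult_right_mono) auto
  moreover have "p 1 \<le> p k" "p k \<le> p n"
    using successive_increments_le[of n p 0 1 k] successive_increments_le[of n p 0 k n] True incr
    by (auto intro: less_imp_le)
  ultimately show ?thesis by linarith
next
  case False
  then show ?thesis using p \<open>G \<ge> 0\<close> by (simp add: sym_chain_def)
qed

lemma sym_chain_sublevel_bounds:
  fixes W :: "real \<Rightarrow> real"
  assumes n2: "n \<ge> 2" and Wc: "continuous_on {0<..} W"
    and lim0W: "filterlim W at_top (at_right 0)" and liminfW: "(W \<longlongrightarrow> 0) at_top"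
  obtains \<delta> M where "\<delta> > 0"
    and "\<And>p. sym_chain n p \<Longrightarrow> Vline W n p \<le> c \<Longrightarrow>
           (\<forall>j\<in>{1..<n}. p j + \<delta> \<le> p (j+1)) \<and> (\<forall>k. \<bar>p k\<bar> \<le> M)"
proof -
  obtain B where B: "B \<ge> 0" "\<And>x. x > 0 \<Longrightarrow> - B \<le> W x"
    using bounded_below_at_right_0_at_top[OF Wc lim0W liminfW] by blast
  define C where "C = c + real n + 2 * (real n * (real n * B))"
  have "eventually (\<lambda>x. C + 1 \<le> W x) (at_right 0)"
    using lim0W by (simp add: filterlim_at_top)
  then obtain \<epsilon> where \<epsilon>: "\<epsilon> > 0" "\<And>x. x > 0 \<Longrightarrow> x < \<epsilon> \<Longrightarrow> C + 1 \<le> W x"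
    by (auto simp: eventually_at_right_field)
  define G where "G = \<bar>C\<bar> + 3"
  have bounds: "(\<forall>j\<in>{1..<n}. p j + sqrt \<epsilon> \<le> p (j+1)) \<and> (\<forall>k. \<bar>p k\<bar> \<le> real n * G)"
    if Sp: "sym_chain n p" and Vp: "Vline W n p \<le> c" for p
  proof -
    have incr: "\<And>i. i \<in> {1..<n} \<Longrightarrow> p i < p (i+1)" using Sp by (simp add: sym_chain_def)
    have terms_le: "Upot ((p (j+1) - p j)^2) \<le> C" "W ((p j - p (j+1))^2) \<le> C"
      if j: "j \<in> {1..<n}" for j
      using Vline_consecutive_terms_le[of B W n p j] B incr j Vp by (auto simp: C_def)
    have gap_lo: "p j + sqrt \<epsilon> \<le> p (j+1)" if j: "j \<in> {1..<n}" for j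
    proof -
      have "\<epsilon> \<le> (p j - p (j+1))^2"
      proof (rule ccontr)
        assume "\<not> ?thesis"
        then have "C + 1 \<le> W ((p j - p (j+1))^2)" using incr[OF j] by (intro \<epsilon>(2)) auto
        then show False using terms_le(2)[OF j] by simp
      qed
      then have "sqrt \<epsilon> \<le> \<bar>p j - p (j+1)\<bar>" using real_sqrt_le_mono by fastforce
      then show ?thesis using incr[OF j] by simp
    qed
    have "p (i+1) \<le> p i + G" if i: "i \<in> {1..<n}" for i
      using abs_le_of_Upot_square_le[OF terms_le(1)[OF i]] by (simp add: G_def)
    then have "\<bar>p k\<bar> \<le> real n * G" for k
      using Sp n2 by (intro sym_chain_abs_le) (auto simp: G_def)
    then show ?thesis using gap_lo by blast
  qed
  show ?thesis using \<epsilon>(1) bounds by (intro that[of "sqrt \<epsilon>" "real n * G"]) auto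
qed

lemma Vline_continuous_on_gapped:
  assumes Wc: "continuous_on {0<..} W" and "\<delta> > 0"
    and gaps: "\<And>p j. p \<in> T \<Longrightarrow> j \<in> {1..<n} \<Longrightarrow> p j + \<delta> \<le> p (j+1)"
  shows "continuous_on T (Vline W n)"
proof -
  have "continuous_on UNIV Upot"
    unfolding Upot_def[abs_def] by (intro continuous_intros)
  then have U: "continuous_on T (\<lambda>p. Upot ((p (j+1) - p j)^2))" for j
    by (rule continuous_on_compose2) (auto intro!: continuous_intros)
  have W: "continuous_on T (\<lambda>p. W ((p j - p k)^2))" if "j \<in> {1..n}" "k \<in> {j+1..n}" for j k
  proof (rule continuous_on_compose2[OF Wc])
    show "continuous_on T (\<lambda>p. (p j - p k)^2)" by (intro continuous_intros)
    show "(\<lambda>p. (p j - p k)^2) ` T \<subseteq> {0<..}"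
    proof (intro image_subsetI)
      fix p assume "p \<in> T"
      have "p i < p (i+1)" if "i \<in> {1..<n}" for i
        using gaps[OF \<open>p \<in> T\<close> that] \<open>\<delta> > 0\<close> by linarith
      then have "p j < p k" using that by (intro strict_chain_less[of n p j k]) auto
      then show "(p j - p k)^2 \<in> {0<..}" by simp
    qed
  qed
  show ?thesis
    unfolding Vline_def[abs_def] by (intro continuous_on_add continuous_on_sum U W)
qed

lemma compact_sym_chain_box:
  "compact {p :: nat \<Rightarrow> real. (\<forall>k. p k \<in> {-M..M}) \<and> (\<forall>k. k \<notin> {1..n} \<longrightarrow> p k = 0)
      \<and> (\<forall>j\<in>{1..n}. p (n+1-j) = - p j) \<and> (\<forall>j\<in>{1..<n}. p j + \<delta> \<le> p (j+1))}"
proof -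
  have "compactin (product_topology (\<lambda>_. euclidean) UNIV) (PiE UNIV (\<lambda>_::nat. {-M..M::real}))"
    by (subst compactin_PiE) auto
  then have "compact (PiE UNIV (\<lambda>_::nat. {-M..M::real}))"
    by (simp add: euclidean_product_topology)
  moreover have "closed {p :: nat \<Rightarrow> real. (\<forall>k. k \<notin> {1..n} \<longrightarrow> p k = 0)
      \<and> (\<forall>j\<in>{1..n}. p (n+1-j) = - p j) \<and> (\<forall>j\<in>{1..<n}. p j + \<delta> \<le> p (j+1))}"
    unfolding Ball_def
    by (intro closed_Collect_conj closed_Collect_all closed_Collect_imp open_Collect_const
        closed_Collect_eq closed_Collect_le continuous_intros)
  ultimately show ?thesis
    by (rule compact_Int_closed[THEN back_subst[of compact]]) (auto simp: PiE_UNIV_domain)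
qed

lemma Vline_has_min_on_sym_chain:
  fixes W :: "real \<Rightarrow> real"
  assumes n2: "n \<ge> 2" and Wc: "continuous_on {0<..} W"
    and lim0W: "filterlim W at_top (at_right 0)" and liminfW: "(W \<longlongrightarrow> 0) at_top"
  obtains a \<delta> where "sym_chain n a" "\<delta> > 0" "\<forall>j\<in>{1..<n}. a j + \<delta> \<le> a (j+1)"
    "\<And>p. sym_chain n p \<Longrightarrow> Vline W n a \<le> Vline W n p"
proof -
  define p0 :: "nat \<Rightarrow> real" where
    "p0 k = (if k \<in> {1..n} then real k - (real n + 1) / 2 else 0)" for k
  have p0: "sym_chain n p0"
    unfolding sym_chain_def p0_def by (auto simp: of_nat_diff field_simps)
  obtain \<delta> M where \<delta>: "\<delta> > 0" and sublevel:
    "\<And>p. sym_chain n p \<Longrightarrow> Vline W n p \<le> Vline W n p0 \<Longrightarrow>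
       (\<forall>j\<in>{1..<n}. p j + \<delta> \<le> p (j+1)) \<and> (\<forall>k. \<bar>p k\<bar> \<le> M)"
    using sym_chain_sublevel_bounds[OF n2 Wc lim0W liminfW] by blast
  define T where "T = {p :: nat \<Rightarrow> real. (\<forall>k. p k \<in> {-M..M}) \<and> (\<forall>k. k \<notin> {1..n} \<longrightarrow> p k = 0)
      \<and> (\<forall>j\<in>{1..n}. p (n+1-j) = - p j) \<and> (\<forall>j\<in>{1..<n}. p j + \<delta> \<le> p (j+1))}"
  have sublevel_T: "p \<in> T" if "sym_chain n p" "Vline W n p \<le> Vline W n p0" for p
    using sublevel[OF that] that(1) unfolding T_def sym_chain_def
    by (simp add: abs_le_iff) (metis minus_le_iff)
  have T_sym_chain: "sym_chain n p" if "p \<in> T" for p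
    using that \<delta> unfolding T_def sym_chain_def by force
  have "compact T" unfolding T_def by (rule compact_sym_chain_box)
  moreover have "continuous_on T (Vline W n)"
    using Wc \<delta> by (rule Vline_continuous_on_gapped) (auto simp: T_def)
  moreover have "p0 \<in> T" using sublevel_T[OF p0] by simp
  ultimately obtain a where "a \<in> T" and a_min: "\<And>p. p \<in> T \<Longrightarrow> Vline W n a \<le> Vline W n p"
    using continuous_attains_inf by (metis empty_iff)
  show ?thesis
  proof (rule that[OF T_sym_chain[OF \<open>a \<in> T\<close>] \<delta>])
    show "\<forall>j\<in>{1..<n}. a j + \<delta> \<le> a (j+1)" using \<open>a \<in> T\<close> by (simp add: T_def)
    show "Vline W n a \<le> Vline W n p" if "sym_chain n p" for p
      using a_min[of p] a_min[OF \<open>p0 \<in> T\<close>] sublevel_T[OF that] by linarith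
  qed
qed

section \<open>Symmetric criticality\<close>

lemma sym_chain_inOmega:
  assumes "sym_chain n p"
  shows "inOmega n (\<lambda>k. of_real (p k))"
  unfolding inOmega_def
proof (intro ballI impI)
  fix j k assume "j \<in> {1..n}" "k \<in> {1..n}" "j \<noteq> k"
  moreover have "\<And>i. i \<in> {1..<n} \<Longrightarrow> p i < p (i+1)" using assms by (simp add: sym_chain_def)
  ultimately have "p j < p k \<or> p k < p j"
    by (cases "j < k") (auto intro: strict_chain_less[of n p])
  then show "complex_of_real (p j) \<noteq> complex_of_real (p k)" by auto
qed

lemma sym_chain_perturb:
  assumes a: "sym_chain n a" and "\<delta> > 0" and gaps: "\<forall>j\<in>{1..<n}. a j + \<delta> \<le> a (j+1)"
    and q: "\<forall>k. k \<notin> {1..n} \<longrightarrow> q k = 0" "\<forall>j\<in>{1..n}. q (n+1-j) = - q j"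
  obtains d where "d > 0" "\<And>y. \<bar>y\<bar> < d \<Longrightarrow> sym_chain n (\<lambda>k. a k + y * q k)"
proof
  define Q where "Q = (\<Sum>k\<in>{1..n}. \<bar>q k\<bar>)"
  have Q: "\<bar>q k\<bar> \<le> Q" if "k \<in> {1..n}" for k
    unfolding Q_def using that by (intro member_le_sum) auto
  have "Q \<ge> 0" unfolding Q_def by (intro sum_nonneg) auto
  then show "\<delta> / (2 * Q + 1) > 0" using \<open>\<delta> > 0\<close> by simp
  fix y :: real assume "\<bar>y\<bar> < \<delta> / (2 * Q + 1)"
  then have y: "\<bar>y\<bar> * (2 * Q + 1) < \<delta>" using \<open>Q \<ge> 0\<close> by (simp add: field_simps)
  have "a j + y * q j < a (j+1) + y * q (j+1)" if j: "j \<in> {1..<n}" for j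
  proof -
    have "\<bar>q (j+1) - q j\<bar> \<le> 2 * Q + 1" using Q[of j] Q[of "j+1"] j by auto
    then have "\<bar>y * (q (j+1) - q j)\<bar> \<le> \<bar>y\<bar> * (2 * Q + 1)"
      by (simp add: abs_mult mult_left_mono)
    moreover have "a j + \<delta> \<le> a (j+1)" using gaps j by blast
    ultimately show ?thesis using y by (auto simp: algebra_simps abs_le_iff)
  qed
  then show "sym_chain n (\<lambda>k. a k + y * q k)"
    using a q by (simp add: sym_chain_def)
qed

lemma sym_chain_min_deriv_symmetric:
  assumes a: "sym_chain n a" and "\<delta> > 0" and gaps: "\<forall>j\<in>{1..<n}. a j + \<delta> \<le> a (j+1)"
    and a_min: "\<And>p. sym_chain n p \<Longrightarrow> Vline W n a \<le> Vline W n p"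
    and dW: "\<And>x. x > 0 \<Longrightarrow> (W has_real_derivative W' x) (at x)"
    and q: "\<forall>k. k \<notin> {1..n} \<longrightarrow> q k = 0" "\<forall>j\<in>{1..n}. q (n+1-j) = - q j"
  shows "Vpot_deriv W' n (\<lambda>k. of_real (a k)) (\<lambda>k. of_real (q k)) = 0"
proof -
  obtain d where "d > 0" and perturb: "\<And>y. \<bar>y\<bar> < d \<Longrightarrow> sym_chain n (\<lambda>k. a k + y * q k)"
    using sym_chain_perturb[OF a \<open>\<delta> > 0\<close> gaps q] by blast
  have line: "Vpot W n (\<lambda>k. of_real (a k) + of_real y * of_real (q k)) = Vline W n (\<lambda>k. a k + y * q k)"
    for y unfolding Vpot_of_real[symmetric] by simp
  have "Vpot W n (\<lambda>k. of_real (a k) + of_real 0 * of_real (q k))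
      \<le> Vpot W n (\<lambda>k. of_real (a k) + of_real y * of_real (q k))" if "\<bar>0 - y\<bar> < d" for y
    using a_min[OF perturb[of y]] that unfolding line by simp
  then show ?thesis
    using DERIV_local_min[OF Vpot_has_directional_derivative[OF sym_chain_inOmega[OF a] dW] \<open>d > 0\<close>]
    by simp
qed

lemma sym_chain_min_critical_point:
  assumes a: "sym_chain n a" and "\<delta> > 0" and gaps: "\<forall>j\<in>{1..<n}. a j + \<delta> \<le> a (j+1)"
    and a_min: "\<And>p. sym_chain n p \<Longrightarrow> Vline W n a \<le> Vline W n p"
    and dW: "\<And>x. x > 0 \<Longrightarrow> (W has_real_derivative W' x) (at x)"
  shows "critical_point W n (\<lambda>k. of_real (a k))"
proof -
  define A where "A = (\<lambda>k. complex_of_real (a k))"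
  define D where "D = Vpot_deriv W' n A"
  have om: "inOmega n A" unfolding A_def using a by (rule sym_chain_inOmega)
  have real_dir: "D (\<lambda>k. of_real (q k)) = 0" for q
  proof -
    define s where "s k = (if k \<in> {1..n} then q k - q (n+1-k) else 0)" for k
    have "D (\<lambda>k. - of_real (q (n+1-k))) = D (\<lambda>k. of_real (q k))"
      unfolding D_def using a
      by (intro Vpot_deriv_reflect[OF om _ dW, where h="\<lambda>k. of_real (q k)"])
         (auto simp: A_def sym_chain_def)
    moreover have "D (\<lambda>k. of_real (s k)) = D (\<lambda>k. of_real (q k) + - of_real (q (n+1-k)))"
      unfolding D_def by (rule Vpot_deriv_cong) (simp add: s_def)
    moreover have "\<dots> = D (\<lambda>k. of_real (q k)) + D (\<lambda>k. - of_real (q (n+1-k)))"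
      unfolding D_def by (rule Vpot_deriv_add)
    moreover have "D (\<lambda>k. of_real (s k)) = 0"
      unfolding D_def A_def using a \<open>\<delta> > 0\<close> gaps a_min dW
      by (rule sym_chain_min_deriv_symmetric) (auto simp: s_def)
    ultimately show ?thesis by simp
  qed
  show ?thesis
    unfolding critical_point_def A_def[symmetric]
  proof (intro ballI allI)
    fix j :: nat and v :: complex
    define h where "h k = (if k = j then v else 0)" for k
    have "A(j := A j + of_real t * v) = (\<lambda>k. A k + of_real t * h k)" for t
      by (auto simp: h_def)
    moreover have "D h = 0"
      using real_dir[of "\<lambda>k. Re (h k)"] Vpot_deriv_of_real_eq_Re[of W' n a h] by (simp add: D_def A_def)
    ultimately show "((\<lambda>t. Vpot W n (A(j := A j + of_real t * v))) has_real_derivative 0) (at 0)"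
      using Vpot_has_directional_derivative[OF om dW, of h] by (simp add: D_def)
  qed
qed

theorem corollary1:
  fixes W W' W'' :: "real \<Rightarrow> real" and n :: nat
  assumes n2: "n \<ge> 2"
    and dW: "\<And>x. x > 0 \<Longrightarrow> (W has_real_derivative W' x) (at x)"
    and dW': "\<And>x. x > 0 \<Longrightarrow> (W' has_real_derivative W'' x) (at x)"
    and cW'': "continuous_on {0<..} W''"
    and lim0W: "filterlim W at_top (at_right 0)"
    and lim0W': "filterlim (\<lambda>x. - W' x) at_top (at_right 0)"
    and liminfW: "(W \<longlongrightarrow> 0) at_top"
    and liminfW': "(W' \<longlongrightarrow> 0) at_top"
  shows "\<exists>a :: nat \<Rightarrow> complex.
           inOmega n a \<and> critical_point W n a
         \<and> (\<forall>j\<in>{1..n}. Im (a j) = 0)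
         \<and> (\<forall>j\<in>{1..<n}. Re (a j) < Re (a (j+1)))
         \<and> (\<forall>j\<in>{1..n}. Re (a (n+1-j)) = - Re (a j))"
proof -
  have "continuous_on {0<..} W"
    using dW by (intro continuous_at_imp_continuous_on) (auto intro: DERIV_isCont)
  then obtain a \<delta> where a: "sym_chain n a" and "\<delta> > 0" and gaps: "\<forall>j\<in>{1..<n}. a j + \<delta> \<le> a (j+1)"
    and a_min: "\<And>p. sym_chain n p \<Longrightarrow> Vline W n a \<le> Vline W n p"
    using Vline_has_min_on_sym_chain[OF n2 _ lim0W liminfW] by blast
  show ?thesis
  proof (intro exI[of _ "\<lambda>k. complex_of_real (a k)"] conjI)
    show "inOmega n (\<lambda>k. complex_of_real (a k))" using a by (rule sym_chain_inOmega)
    show "critical_point W n (\<lambda>k. complex_of_real (a k))"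
      using a \<open>\<delta> > 0\<close> gaps a_min dW by (rule sym_chain_min_critical_point)
  qed (use a in \<open>auto simp: sym_chain_def\<close>)
qed

end
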